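(* Let $D$ be a quiver with $V(D)\neq\emptyset$, and let $L(D)$ be its loading. Define $j_{D,V} : V(D)\to V(L(D))$ by $j_{D,V}(v)=v$ and $j_{D,E} : E(D)\to E(L(D))$ by $j_{D,E}(e)=(0,e)$. Then $j_D := (j_{D,V},j_{D,E})$ is a mono-essential quiver homomorphism, and $L(D)$ equipped with $j_D$ is a mono-injective envelope of $D$ in $\mathbf{Quiv}$.
   Context: A quiver is a quadruple $(V,E,\sigma,\tau)$ with $V,E$ sets and $\sigma,\tau : E \to V$ functions (source and target). A quiver homomorphism is a pair of functions on vertices and edges commuting with sources and targets; $\mathbf{Quiv}$ is the category of quivers and these homomorphisms. A homomorphism is monic iff its vertex and edge maps are both injective. For $v,w\in V(D)$, $\mathrm{edges}_D(v,w):=\sigma_D^{-1}(v)\cap\tau_D^{-1}(w)$. The loading $L(D)$ of $D$ has vertex set $V(D)$, edge set $\{(0,e): e\in E(D)\}\cup\{(1,v,w): v,w\in V(D),\ \mathrm{edges}_D(v,w)=\emptyset\}$, with source and target $\sigma(0,e)=\sigma_D(e)$, $\tau(0,e)=\tau_D(e)$, $\sigma(1,v,w)=v$, $\tau(1,v,w)=w$. A quiver $J$ is mono-injective if for every monic $\phi: A\to B$ and every $\psi: A\to J$ there exists $\hat\psi : B\to J$ with $\hat\psi\circ\phi=\psi$. A monic $\varphi : D\to C$ is mono-essential if for every quiver $A$ and homomorphism $\alpha: C\to A$, $\alpha\circ\varphi$ monic implies $\alpha$ monic. A mono-injective envelope of $D$ is a mono-injective quiver $C$ together with a mono-essential homomorphism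 $D\to C$. *)

theory Defs
  imports Main
begin

record ('v, 'e) quiver =
  verts :: "'v set"
  arcs  :: "'e set"
  src   :: "'e \<Rightarrow> 'v"
  tgt   :: "'e \<Rightarrow> 'v"

definition quiver :: "('v, 'e) quiver \<Rightarrow> bool" where
  "quiver D \<longleftrightarrow> (\<forall>e\<in>arcs D. src D e \<in> verts D \<and> tgt D e \<in> verts D)"

type_synonym ('v1, 'e1, 'v2, 'e2) qmap = "('v1 \<Rightarrow> 'v2) \<times> ('e1 \<Rightarrow> 'e2)"

definition qhom :: "('v1, 'e1) quiver \<Rightarrow> ('v2, 'e2) quiver \<Rightarrow> ('v1, 'e1, 'v2, 'e2) qmap \<Rightarrow> bool" where
  "qhom D C f \<longleftrightarrow> quiver D \<and> quiver C \<and>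
     (\<forall>v\<in>verts D. fst f v \<in> verts C) \<and>
     (\<forall>e\<in>arcs D. snd f e \<in> arcs C \<and> src C (snd f e) = fst f (src D e)
                   \<and> tgt C (snd f e) = fst f (tgt D e))"

definition qcomp :: "('v2, 'e2, 'v3, 'e3) qmap \<Rightarrow> ('v1, 'e1, 'v2, 'e2) qmap \<Rightarrow> ('v1, 'e1, 'v3, 'e3) qmap" where
  "qcomp g f = (fst g \<circ> fst f, snd g \<circ> snd f)"

definition monic :: "('v1, 'e1) quiver \<Rightarrow> ('v2, 'e2) quiver \<Rightarrow> ('v1, 'e1, 'v2, 'e2) qmap \<Rightarrow> bool" where
  "monic D C f \<longleftrightarrow> qhom D C f \<and> inj_on (fst f) (verts D) \<and> inj_on (snd f) (arcs D)"

text \<open>Mono-injectivity. Quantification over all quivers A, B is over quivers whose vertex/edge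
  types are given by the type arguments; a theorem stated with free type variables holds for all types.\<close>
definition mono_injective ::
  "'va itself \<Rightarrow> 'ea itself \<Rightarrow> 'vb itself \<Rightarrow> 'eb itself \<Rightarrow> ('v, 'e) quiver \<Rightarrow> bool" where
  "mono_injective _ _ _ _ J \<longleftrightarrow> quiver J \<and>
     (\<forall>(A :: ('va, 'ea) quiver) (B :: ('vb, 'eb) quiver) \<phi> \<psi>.
        monic A B \<phi> \<and> qhom A J \<psi> \<longrightarrow>
        (\<exists>\<psi>'. qhom B J \<psi>' \<and>
              (\<forall>v\<in>verts A. fst (qcomp \<psi>' \<phi>) v = fst \<psi> v) \<and>
              (\<forall>e\<in>arcs A. snd (qcomp \<psi>' \<phi>) e = snd \<psi> e)))"

definition mono_essential ::
  "'va itself \<Rightarrow> 'ea itself \<Rightarrow> ('v1, 'e1) quiver \<Rightarrow> ('v2, 'e2) quiver \<Rightarrow> ('v1, 'e1, 'v2, 'e2) qmap \<Rightarrow> bool" where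
  "mono_essential _ _ D C \<phi> \<longleftrightarrow> monic D C \<phi> \<and>
     (\<forall>(A :: ('va, 'ea) quiver) \<alpha>. qhom C A \<alpha> \<and> monic D A (qcomp \<alpha> \<phi>) \<longrightarrow> monic C A \<alpha>)"

definition mono_injective_envelope ::
  "'va itself \<Rightarrow> 'ea itself \<Rightarrow> 'vb itself \<Rightarrow> 'eb itself \<Rightarrow> 'vc itself \<Rightarrow> 'ec itself \<Rightarrow>
   ('v1, 'e1) quiver \<Rightarrow> ('v2, 'e2) quiver \<Rightarrow> ('v1, 'e1, 'v2, 'e2) qmap \<Rightarrow> bool" where
  "mono_injective_envelope ta tb tc td te tf D C \<phi> \<longleftrightarrow>
     mono_injective ta tb tc td C \<and> mono_essential te tf D C \<phi>"

definition edges :: "('v, 'e) quiver \<Rightarrow> 'v \<Rightarrow> 'v \<Rightarrow> 'e set" where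
  "edges D v w = {e \<in> arcs D. src D e = v \<and> tgt D e = w}"

text \<open>Loading: edge (0,e) is Inl e, edge (1,v,w) is Inr (v,w).\<close>
definition loading :: "('v, 'e) quiver \<Rightarrow> ('v, 'e + ('v \<times> 'v)) quiver" where
  "loading D = \<lparr> verts = verts D,
     arcs = Inl ` arcs D \<union> {Inr (v, w) | v w. v \<in> verts D \<and> w \<in> verts D \<and> edges D v w = {}},
     src = (\<lambda>x. case x of Inl e \<Rightarrow> src D e | Inr p \<Rightarrow> fst p),
     tgt = (\<lambda>x. case x of Inl e \<Rightarrow> tgt D e | Inr p \<Rightarrow> snd p) \<rparr>"

definition jmap :: "('v, 'e) quiver \<Rightarrow> ('v, 'e, 'v, 'e + ('v \<times> 'v)) qmap" where
  "jmap D = (\<lambda>v. v, Inl)"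

end

theory Submission
  imports Defs
begin

text \<open>The loading adds an edge v \<rightarrow> w exactly when there was none, so in L(D) every ordered pair
  of vertices is joined, and parallel edges can only be old edges of D. The first property makes
  L(D) mono-injective: a monic B \<supseteq> A is mapped to L(D) by extending the given map arbitrarily on
  new vertices and sending each new edge to some edge between the images of its endpoints. The
  second makes j essential: a homomorphism that is injective on D is injective on vertices of L(D)
  (which are those of D), hence can identify two edges of L(D) only if they are parallel, and
  parallel edges come from D.\<close>

lemma mono_injective_if_all_pairs_joined:
  assumes J: "quiver J" and ne: "verts J \<noteq> {}"
    and joined: "\<And>v w. v \<in> verts J \<Longrightarrow> w \<in> verts J \<Longrightarrow> \<exists>x\<in>arcs J. src J x = v \<and> tgt J x = w"
  shows "mono_injective TYPE('va) TYPE('ea) TYPE('vb) TYPE('eb) J"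
  unfolding mono_injective_def
proof (intro conjI allI impI)
  show "quiver J" by (rule J)
  fix A :: "('va, 'ea) quiver" and B :: "('vb, 'eb) quiver" and \<phi> \<psi>
  assume "monic A B \<phi> \<and> qhom A J \<psi>"
  then have iv: "inj_on (fst \<phi>) (verts A)" and ie: "inj_on (snd \<phi>) (arcs A)"
    and \<phi>: "qhom A B \<phi>" and \<psi>: "qhom A J \<psi>" by (auto simp: monic_def)
  obtain v0 where v0: "v0 \<in> verts J" using ne by auto
  define f where "f v = (if v \<in> fst \<phi> ` verts A then fst \<psi> (inv_into (verts A) (fst \<phi>) v) else v0)"
    for v
  define join where "join v w = (SOME x. x \<in> arcs J \<and> src J x = v \<and> tgt J x = w)" for v w
  define g where "g e = (if e \<in> snd \<phi> ` arcs A then snd \<psi> (inv_into (arcs A) (snd \<phi>) e)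
      else join (f (src B e)) (f (tgt B e)))" for e
  have f_ext: "f (fst \<phi> v) = fst \<psi> v" if "v \<in> verts A" for v
    using iv that by (simp add: f_def)
  have g_ext: "g (snd \<phi> e) = snd \<psi> e" if "e \<in> arcs A" for e
    using ie that by (simp add: g_def)
  have f_verts: "f v \<in> verts J" for v
    using \<psi> v0 by (auto simp: f_def qhom_def inv_into_into)
  have join: "join v w \<in> arcs J \<and> src J (join v w) = v \<and> tgt J (join v w) = w"
    if "v \<in> verts J" "w \<in> verts J" for v w
    unfolding join_def using someI_ex[OF joined[OF that, unfolded Bex_def]] .
  have g_arc: "g e \<in> arcs J \<and> src J (g e) = f (src B e) \<and> tgt J (g e) = f (tgt B e)"
    if e: "e \<in> arcs B" for e
  proof (cases "e \<in> snd \<phi> ` arcs A")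
    case True
    then obtain a where a: "a \<in> arcs A" "e = snd \<phi> a" by auto
    then have "src B e = fst \<phi> (src A a)" "tgt B e = fst \<phi> (tgt A a)"
      "src A a \<in> verts A" "tgt A a \<in> verts A"
      using \<phi> by (auto simp: qhom_def quiver_def)
    with a show ?thesis using g_ext f_ext \<psi> by (auto simp: qhom_def)
  next
    case False
    then show ?thesis using join[OF f_verts f_verts] by (simp add: g_def)
  qed
  have "qhom B J (f, g)"
    using \<phi> J f_verts g_arc by (simp add: qhom_def)
  then show "\<exists>\<psi>'. qhom B J \<psi>' \<and> (\<forall>v\<in>verts A. fst (qcomp \<psi>' \<phi>) v = fst \<psi> v)
                           \<and> (\<forall>e\<in>arcs A. snd (qcomp \<psi>' \<phi>) e = snd \<psi> e)"
    using f_ext g_ext by (intro exI[of _ "(f, g)"]) (simp add: qcomp_def)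
qed

lemma mono_essential_if_parallel_arcs_in_image:
  assumes \<phi>: "monic D C \<phi>" and surj: "fst \<phi> ` verts D = verts C"
    and parallel: "\<And>x y. x \<in> arcs C \<Longrightarrow> y \<in> arcs C \<Longrightarrow> x \<noteq> y \<Longrightarrow>
        src C x = src C y \<Longrightarrow> tgt C x = tgt C y \<Longrightarrow> x \<in> snd \<phi> ` arcs D"
  shows "mono_essential TYPE('va) TYPE('ea) D C \<phi>"
  unfolding mono_essential_def
proof (intro conjI allI impI)
  show "monic D C \<phi>" by (rule \<phi>)
  fix A :: "('va, 'ea) quiver" and \<alpha>
  assume "qhom C A \<alpha> \<and> monic D A (qcomp \<alpha> \<phi>)"
  then have \<alpha>: "qhom C A \<alpha>" and iv_comp: "inj_on (fst \<alpha> \<circ> fst \<phi>) (verts D)"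
    and ie_comp: "inj_on (snd \<alpha> \<circ> snd \<phi>) (arcs D)"
    by (auto simp: monic_def qcomp_def)
  have C: "quiver C" using \<alpha> by (simp add: qhom_def)
  have iv: "inj_on (fst \<alpha>) (verts C)"
    using inj_on_imageI[OF iv_comp] surj by simp
  have "x = y" if x: "x \<in> arcs C" and y: "y \<in> arcs C" and eq: "snd \<alpha> x = snd \<alpha> y" for x y
  proof (rule ccontr)
    assume neq: "x \<noteq> y"
    have "fst \<alpha> (src C x) = fst \<alpha> (src C y)" "fst \<alpha> (tgt C x) = fst \<alpha> (tgt C y)"
      using \<alpha> x y eq unfolding qhom_def by metis+
    then have "src C x = src C y" "tgt C x = tgt C y"
      using C x y by (auto simp: quiver_def intro: inj_onD[OF iv])
    then have "x \<in> snd \<phi> ` arcs D" "y \<in> snd \<phi> ` arcs D"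
      using parallel[OF x y neq] parallel[OF y x neq[symmetric]] by simp_all
    then obtain a b where "a \<in> arcs D" "b \<in> arcs D" "x = snd \<phi> a" "y = snd \<phi> b" by auto
    with eq neq inj_onD[OF ie_comp, of a b] show False by simp
  qed
  then have "inj_on (snd \<alpha>) (arcs C)" by (rule inj_onI)
  with \<alpha> iv show "monic C A \<alpha>" by (simp add: monic_def)
qed

lemma verts_loading [simp]: "verts (loading D) = verts D"
  by (simp add: loading_def)

lemma quiver_loading: "quiver D \<Longrightarrow> quiver (loading D)"
  unfolding quiver_def loading_def by auto

lemma loading_all_pairs_joined:
  assumes "v \<in> verts D" "w \<in> verts D"
  shows "\<exists>x\<in>arcs (loading D). src (loading D) x = v \<and> tgt (loading D) x = w"
proof (cases "edges D v w = {}")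
  case True
  then show ?thesis using assms by (intro bexI[of _ "Inr (v, w)"]) (auto simp: loading_def)
next
  case False
  then obtain e where "e \<in> edges D v w" by auto
  then show ?thesis by (intro bexI[of _ "Inl e"]) (auto simp: loading_def edges_def)
qed

lemma loading_parallel_arcs_old:
  assumes "x \<in> arcs (loading D)" "y \<in> arcs (loading D)" "x \<noteq> y"
    and "src (loading D) x = src (loading D) y" "tgt (loading D) x = tgt (loading D) y"
  shows "x \<in> Inl ` arcs D"
  using assms by (auto simp: loading_def edges_def)

lemma qhom_jmap: "quiver D \<Longrightarrow> qhom D (loading D) (jmap D)"
  using quiver_loading by (auto simp: qhom_def jmap_def loading_def quiver_def)

lemma monic_jmap: "quiver D \<Longrightarrow> monic D (loading D) (jmap D)"
  using qhom_jmap by (simp add: monic_def jmap_def)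

theorem mainTheorem5:
  fixes D :: "('v, 'e) quiver"
  assumes "quiver D" and "verts D \<noteq> {}"
  shows "qhom D (loading D) (jmap D)
         \<and> mono_essential TYPE('va) TYPE('ea) D (loading D) (jmap D)
         \<and> mono_injective_envelope TYPE('xa) TYPE('ya) TYPE('xb) TYPE('yb) TYPE('va) TYPE('ea)
             D (loading D) (jmap D)"
proof -
  have essential: "mono_essential TYPE('va) TYPE('ea) D (loading D) (jmap D)"
  proof (rule mono_essential_if_parallel_arcs_in_image)
    show "monic D (loading D) (jmap D)" using assms(1) by (rule monic_jmap)
    show "fst (jmap D) ` verts D = verts (loading D)" by (simp add: jmap_def)
  qed (simp add: jmap_def loading_parallel_arcs_old)
  have injective: "mono_injective TYPE('xa) TYPE('ya) TYPE('xb) TYPE('yb) (loading D)"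
  proof (rule mono_injective_if_all_pairs_joined)
    show "quiver (loading D)" using assms(1) by (rule quiver_loading)
    show "verts (loading D) \<noteq> {}" using assms(2) by simp
  qed (simp add: loading_all_pairs_joined)
  show ?thesis
    using qhom_jmap[OF assms(1)] essential injective by (simp add: mono_injective_envelope_def)
qed

end
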